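(* Let $n\ge2$ and let $X_1,\dots,X_n$ be nonnegative (possibly dependent) random variables with order statistics $X_{1:n}\le\cdots\le X_{n:n}$, and suppose one of the following holds: (A) the distribution function of $X_{n:n}$ has infinite upper endpoint, $X_{n:n}\in\mathrm{GMDA}(h)$ for some positive $h$, and $$\lim_{x\to\infty}\frac{\mathbb{P}(|X_i|>t h(x),X_j>x)}{\mathbb{P}(X_{n:n}>x)}=0\ \text{for all }1\le i\ne j\le n,\ t>0,\qquad(\ast)$$ $$\lim_{x\to\infty}\frac{\mathbb{P}(X_i>Lh(x),X_j>Lh(x))}{\mathbb{P}(X_{n:n}>x)}=0\ \text{for all }1\le i<j\le n\text{ and some }L>0;\qquad(\ast\ast)$$ (B) $X_{n:n}\in\mathcal{L}$ and there exists $h\in\mathcal{H}_{X_{n:n}}$ such that $(\ast)$ and $(\ast\ast)$ hold; (C) $X_{n:n}\in\mathcal{L}\cap\mathcal{D}$ and there exists a dominatedly varying $h\in\mathcal{H}_{X_{n:n}}$ such that $(\ast)$ holds. Then for any $0<a\le b<\infty$ and $0\le d<\infty$, $$\mathbb{P}\Big(\sum_{i=0}^{n-1}c_iX_{n-i:n}>x\Big)\sim\mathbb{P}(c_0X_{n:n}>x)\sim\sum_{i=1}^n\mathbb{P}(c_0X_i>x),\qquad x\to\infty,$$ uniformly for $(c_0,c_1,\dots,c_{n-1})\in[a,b]\times[-d,d]^{n-1}$.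
   Context: Random variables are assumed not degenerate at $0$ (not concentrated on $(-\infty,0]$). For a distribution function $F$, $\overline{F}=1-F$, $x_F=\sup\{x:F(x)<1\}$. $F\in\mathrm{GMDA}(h)$ means $\lim_{x\to x_F}\overline{F}(x+yh(x))/\overline{F}(x)=e^{-y}$ for all $y\in\mathbb{R}$. $F\in\mathcal{L}$ means $\overline{F}(x)>0$ for all $x\ge0$ and $\overline{F}(x+y)\sim\overline{F}(x)$ for all $y\in\mathbb{R}$. $F\in\mathcal{D}$ means $\overline{F}$ is dominatedly varying; a positive $g$ is dominatedly varying if $0<\liminf g(xy)/g(x)\le\limsup g(xy)/g(x)<\infty$ as $x\to\infty$ for every $y>0$. For $F\in\mathcal{L}$, $\mathcal{H}_F$ is the set of eventually positive $h$ with $h(x)=o(x)$, $\overline{F}(x+yh(x))\sim\overline{F}(x)$ for all $y\in\mathbb{R}$, and $\limsup_{x\to\infty}h(x+yh(x))/h(x)<\infty$ for all $y\in\mathbb{R}$. "Uniformly" means the suprema over the parameter set of the deviations of the ratios from $1$ tend to $0$. *)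

theory Defs
  imports "HOL-Probability.Probability"
begin

definition ordstat :: "nat \<Rightarrow> (nat \<Rightarrow> 'a \<Rightarrow> real) \<Rightarrow> nat \<Rightarrow> 'a \<Rightarrow> real" where
  "ordstat n X k \<omega> = sort (map (\<lambda>i. X i \<omega>) [1..<Suc n]) ! (k - 1)"

definition distF :: "'a measure \<Rightarrow> ('a \<Rightarrow> real) \<Rightarrow> real \<Rightarrow> real" where
  "distF M Y x = measure M {\<omega> \<in> space M. Y \<omega> \<le> x}"

definition upper_endpoint :: "(real \<Rightarrow> real) \<Rightarrow> ereal" where
  "upper_endpoint F = Sup (ereal ` {x. F x < 1})"

definition gmda :: "(real \<Rightarrow> real) \<Rightarrow> (real \<Rightarrow> real) \<Rightarrow> bool" where
  "gmda F h \<longleftrightarrow> (\<forall>y. ((\<lambda>x. (1 - F (x + y * h x)) / (1 - F x)) \<longlongrightarrow> exp (- y))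
      (if upper_endpoint F = \<infinity> then at_top else at_left (real_of_ereal (upper_endpoint F))))"

definition longtailed :: "(real \<Rightarrow> real) \<Rightarrow> bool" where
  "longtailed F \<longleftrightarrow> (\<forall>x\<ge>0. 1 - F x > 0) \<and>
     (\<forall>y. ((\<lambda>x. (1 - F (x + y)) / (1 - F x)) \<longlongrightarrow> 1) at_top)"

definition domvar :: "(real \<Rightarrow> real) \<Rightarrow> bool" where
  "domvar g \<longleftrightarrow> eventually (\<lambda>x. g x > 0) at_top \<and>
     (\<forall>y>0. 0 < Liminf at_top (\<lambda>x. ereal (g (x * y) / g x)) \<and>
            Limsup at_top (\<lambda>x. ereal (g (x * y) / g x)) < \<infinity>)"

definition domvar_dist :: "(real \<Rightarrow> real) \<Rightarrow> bool" where
  "domvar_dist F \<longleftrightarrow> domvar (\<lambda>x. 1 - F x)"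

definition Hclass :: "(real \<Rightarrow> real) \<Rightarrow> (real \<Rightarrow> real) set" where
  "Hclass F = {h. eventually (\<lambda>x. h x > 0) at_top \<and>
      ((\<lambda>x. h x / x) \<longlongrightarrow> 0) at_top \<and>
      (\<forall>y. ((\<lambda>x. (1 - F (x + y * h x)) / (1 - F x)) \<longlongrightarrow> 1) at_top) \<and>
      (\<forall>y. Limsup at_top (\<lambda>x. ereal (h (x + y * h x) / h x)) < \<infinity>)}"

definition cond_star :: "'a measure \<Rightarrow> nat \<Rightarrow> (nat \<Rightarrow> 'a \<Rightarrow> real) \<Rightarrow> (real \<Rightarrow> real) \<Rightarrow> bool" where
  "cond_star M n X h \<longleftrightarrow> (\<forall>i\<in>{1..n}. \<forall>j\<in>{1..n}. i \<noteq> j \<longrightarrow> (\<forall>t>0.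
     ((\<lambda>x. measure M {\<omega> \<in> space M. \<bar>X i \<omega>\<bar> > t * h x \<and> X j \<omega> > x}
          / measure M {\<omega> \<in> space M. ordstat n X n \<omega> > x}) \<longlongrightarrow> 0) at_top))"

definition cond_starstar :: "'a measure \<Rightarrow> nat \<Rightarrow> (nat \<Rightarrow> 'a \<Rightarrow> real) \<Rightarrow> (real \<Rightarrow> real) \<Rightarrow> bool" where
  "cond_starstar M n X h \<longleftrightarrow> (\<exists>L>0. \<forall>i\<in>{1..n}. \<forall>j\<in>{1..n}. i < j \<longrightarrow>
     ((\<lambda>x. measure M {\<omega> \<in> space M. X i \<omega> > L * h x \<and> X j \<omega> > L * h x}
          / measure M {\<omega> \<in> space M. ordstat n X n \<omega> > x}) \<longlongrightarrow> 0) at_top)"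

end

theory Submission
  imports Defs
begin

(*
  Write Xmax and Xsec for the largest and the second largest of the X i, and tail y = P(Xmax > y).
  For c in the box, nonnegativity gives |sum_i c i X_(n-i:n) - c 0 Xmax| <= c 0 E Xsec with
  E = d (n - 1) / a, so P(sum > x) lies between P(Xmax - E Xsec > y) and P(Xmax + E Xsec > y) for
  y = x / c 0 >= x / b, and it suffices to show that both are tail y (1 + o(1)).

  By cond_star, P(Xsec > t h(y), Xmax > y) = o(tail y). As tail barely changes when y is shifted
  by a small multiple of h(y), this gives the lower bound, and it gives the upper bound once also
  P(Xmax + E Xsec > y, Xsec > t h(y)) = o(tail y). In cases (A) and (B) the latter follows from
  cond_starstar and the local stability of h; in case (C) from the dominated variation of tail
  and h, because the event forces Xmax > y / (1 + E).

  Finally tail y <= sum_i P(X i > y) <= tail y + sum_(i ~= j) P(X i > y, X j > y), and the double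
  sum is o(tail y) by cond_star, since h(y) <= y eventually.
*)

lemma sorted_nth_gt_iff_length_filter:
  fixes ys :: "'b::linorder list"
  assumes "sorted ys" "length ys = n" "1 \<le> k" "k \<le> n"
  shows "x < ys ! (k - 1) \<longleftrightarrow> n - k + 1 \<le> length (filter (\<lambda>v. x < v) ys)"
proof -
  have len: "length (filter (\<lambda>v. x < v) ys) = card {j. j < n \<and> x < ys ! j}"
    using assms(2) by (simp add: length_filter_conv_card)
  have mono: "ys ! i \<le> ys ! j" if "i \<le> j" "j < n" for i j
    using sorted_nth_mono[OF assms(1) that(1)] that assms(2) by simp
  show ?thesis
  proof
    assume "x < ys ! (k - 1)"
    then have "{k - 1..<n} \<subseteq> {j. j < n \<and> x < ys ! j}"
      using mono by (force intro: less_le_trans)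
    then have "card {k - 1..<n} \<le> card {j. j < n \<and> x < ys ! j}"
      by (intro card_mono) auto
    then show "n - k + 1 \<le> length (filter (\<lambda>v. x < v) ys)"
      using len assms by simp
  next
    assume count: "n - k + 1 \<le> length (filter (\<lambda>v. x < v) ys)"
    show "x < ys ! (k - 1)"
    proof (rule ccontr)
      assume le: "\<not> x < ys ! (k - 1)"
      have "k \<le> j" if "j < n" "x < ys ! j" for j
      proof (rule ccontr)
        assume "\<not> k \<le> j"
        then have "ys ! j \<le> ys ! (k - 1)" using mono[of j "k - 1"] assms(3,4) by simp
        then show False using that(2) le by simp
      qed
      then have "{j. j < n \<and> x < ys ! j} \<subseteq> {k..<n}" by auto
      then have "card {j. j < n \<and> x < ys ! j} \<le> card {k..<n}"
        by (intro card_mono) auto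
      then show False using count len assms by simp
    qed
  qed
qed

lemma ordstat_gt_iff:
  assumes "1 \<le> k" "k \<le> n"
  shows "x < ordstat n X k \<omega> \<longleftrightarrow> n - k + 1 \<le> card {i\<in>{1..n}. x < X i \<omega>}"
proof -
  let ?xs = "map (\<lambda>i. X i \<omega>) [1..<Suc n]"
  have "length (filter (\<lambda>v. x < v) (sort ?xs)) = length (filter (\<lambda>v. x < v) ?xs)"
    by (metis mset_filter mset_sort size_mset)
  also have "\<dots> = length (filter (\<lambda>i. x < X i \<omega>) [1..<Suc n])"
    by (simp add: filter_map comp_def)
  also have "\<dots> = card {i\<in>{1..n}. x < X i \<omega>}"
    by (subst distinct_length_filter) (auto intro: arg_cong[where f = card])
  finally show ?thesis
    unfolding ordstat_def using sorted_nth_gt_iff_length_filter[of "sort ?xs" n k x] assms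
    by simp
qed

lemma ordstat_mono:
  assumes "1 \<le> k" "k \<le> k'" "k' \<le> n"
  shows "ordstat n X k \<omega> \<le> ordstat n X k' \<omega>"
proof (rule ccontr)
  let ?y = "ordstat n X k' \<omega>"
  assume "\<not> ?thesis"
  then have "n - k + 1 \<le> card {i\<in>{1..n}. ?y < X i \<omega>}"
    using ordstat_gt_iff[of k n ?y X \<omega>] assms by simp
  then have "?y < ?y"
    using ordstat_gt_iff[of k' n ?y X \<omega>] assms by simp
  then show False by simp
qed

lemma ordstat_nonneg:
  assumes "\<And>i. i \<in> {1..n} \<Longrightarrow> 0 \<le> X i \<omega>" "1 \<le> k" "k \<le> n"
  shows "0 \<le> ordstat n X k \<omega>"
proof (rule ccontr)
  let ?y = "ordstat n X k \<omega>"
  assume "\<not> ?thesis"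
  then have "?y < X i \<omega>" if "i \<in> {1..n}" for i
    using assms(1)[OF that] by linarith
  then have "{i\<in>{1..n}. ?y < X i \<omega>} = {1..n}" by blast
  then have "?y < ?y"
    using ordstat_gt_iff[of k n ?y X \<omega>] assms(2,3) by simp
  then show False by simp
qed

lemma ordstat_max_gt_iff:
  assumes "1 \<le> n"
  shows "x < ordstat n X n \<omega> \<longleftrightarrow> (\<exists>i\<in>{1..n}. x < X i \<omega>)"
proof -
  have "x < ordstat n X n \<omega> \<longleftrightarrow> 0 < card {i\<in>{1..n}. x < X i \<omega>}"
    using ordstat_gt_iff[of n n x X \<omega>] assms by (simp add: Suc_le_eq)
  also have "\<dots> \<longleftrightarrow> {i\<in>{1..n}. x < X i \<omega>} \<noteq> {}"
    by (simp add: card_gt_0_iff)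
  also have "\<dots> \<longleftrightarrow> (\<exists>i\<in>{1..n}. x < X i \<omega>)"
    by blast
  finally show ?thesis .
qed

lemma ordstat_second_gt_imp:
  assumes "2 \<le> n" "x < ordstat n X (n - 1) \<omega>"
  shows "\<exists>i\<in>{1..n}. \<exists>j\<in>{1..n}. i < j \<and> x < X i \<omega> \<and> x < X j \<omega>"
proof -
  let ?S = "{i\<in>{1..n}. x < X i \<omega>}"
  have "2 \<le> card ?S"
    using ordstat_gt_iff[of "n - 1" n x X \<omega>] assms by (simp add: eval_nat_numeral)
  then have "\<not> card ?S \<le> Suc 0" by linarith
  then obtain i j where ij: "i \<in> ?S" "j \<in> ?S" "i \<noteq> j"
    by (subst (asm) card_le_Suc0_iff_eq) auto
  show ?thesis
  proof (cases "i < j")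
    case True
    then show ?thesis using ij(1,2) by (intro bexI[of _ i] bexI[of _ j]) auto
  next
    case False
    then have "j < i" using ij(3) by linarith
    then show ?thesis using ij(1,2) by (intro bexI[of _ j] bexI[of _ i]) auto
  qed
qed

lemma sets_card_exceedances_ge:
  fixes X :: "nat \<Rightarrow> 'a \<Rightarrow> real"
  assumes meas: "\<And>i. i \<in> {1..n} \<Longrightarrow> X i \<in> borel_measurable M" and r: "1 \<le> r"
  shows "{\<omega>\<in>space M. r \<le> card {i\<in>{1..n}. x < X i \<omega>}} \<in> sets M"
proof -
  let ?I = "{S. S \<subseteq> {1..n} \<and> r \<le> card S}"
  have eq: "{\<omega>\<in>space M. r \<le> card {i\<in>{1..n}. x < X i \<omega>}} =
      (\<Union>S\<in>?I. \<Inter>i\<in>S. {\<omega>\<in>space M. x < X i \<omega>})"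
  proof (intro equalityI subsetI)
    fix \<omega> assume \<omega>: "\<omega> \<in> {\<omega>\<in>space M. r \<le> card {i\<in>{1..n}. x < X i \<omega>}}"
    then have "{i\<in>{1..n}. x < X i \<omega>} \<in> ?I" by auto
    moreover have "\<omega> \<in> (\<Inter>i\<in>{i\<in>{1..n}. x < X i \<omega>}. {\<omega>\<in>space M. x < X i \<omega>})"
      using \<omega> by auto
    ultimately show "\<omega> \<in> (\<Union>S\<in>?I. \<Inter>i\<in>S. {\<omega>\<in>space M. x < X i \<omega>})" by blast
  next
    fix \<omega> assume "\<omega> \<in> (\<Union>S\<in>?I. \<Inter>i\<in>S. {\<omega>\<in>space M. x < X i \<omega>})"
    then obtain S where S: "S \<subseteq> {1..n}" "r \<le> card S" and in_S: "\<forall>i\<in>S. \<omega> \<in> space M \<and> x < X i \<omega>"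
      by blast
    have "S \<noteq> {}" using S r by auto
    then have "\<omega> \<in> space M" using in_S by auto
    moreover have "card S \<le> card {i\<in>{1..n}. x < X i \<omega>}"
      using S in_S by (intro card_mono) auto
    ultimately show "\<omega> \<in> {\<omega>\<in>space M. r \<le> card {i\<in>{1..n}. x < X i \<omega>}}" using S by auto
  qed
  have "finite ?I" by (rule finite_subset[of _ "Pow {1..n}"]) auto
  then show ?thesis unfolding eq
  proof (rule sets.finite_UN)
    fix S assume S: "S \<in> ?I"
    then have "S \<noteq> {}" "finite S" using r finite_subset[of S "{1..n}"] by auto
    then show "(\<Inter>i\<in>S. {\<omega>\<in>space M. x < X i \<omega>}) \<in> sets M"
      using S meas by (intro sets.finite_INT) (auto simp: borel_measurable_iff_greater)
  qed
qed

lemma borel_measurable_ordstat: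
  assumes "\<And>i. i \<in> {1..n} \<Longrightarrow> X i \<in> borel_measurable M" "1 \<le> k" "k \<le> n"
  shows "ordstat n X k \<in> borel_measurable M"
  unfolding borel_measurable_iff_greater ordstat_gt_iff[OF assms(2,3)]
  by (intro allI sets_card_exceedances_ge[OF assms(1)]) simp_all

lemma (in finite_measure) measure_le_sum_cover:
  assumes "finite I" "\<And>i. i \<in> I \<Longrightarrow> B i \<in> sets M" "A \<subseteq> (\<Union>i\<in>I. B i)"
  shows "measure M A \<le> (\<Sum>i\<in>I. measure M (B i))"
  using finite_measure_mono[OF assms(3) sets.finite_UN] measure_UNION_le[of I B M] assms(1,2)
  by fastforce

lemma (in finite_measure) measure_le_cover2:
  assumes "A \<subseteq> B \<union> C" "B \<in> sets M" "C \<in> sets M"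
  shows "measure M A \<le> measure M B + measure M C"
  using finite_measure_mono[OF assms(1)] measure_Un_le[OF assms(2,3)] assms(2,3) by fastforce

definition sublinear :: "(real \<Rightarrow> real) \<Rightarrow> bool" where
  "sublinear h \<longleftrightarrow> (\<forall>\<delta>>0. eventually (\<lambda>y. h y \<le> \<delta> * y) at_top)"

lemma sublinearI_tendsto:
  assumes "((\<lambda>x. h x / x) \<longlongrightarrow> 0) at_top"
  shows "sublinear h"
  unfolding sublinear_def
proof (intro allI impI)
  fix \<delta> :: real assume "0 < \<delta>"
  with assms have "eventually (\<lambda>x. h x / x < \<delta>) at_top" by (rule order_tendstoD(2))
  then show "eventually (\<lambda>y. h y \<le> \<delta> * y) at_top"
    using eventually_gt_at_top[of 0] by eventually_elim (simp add: pos_divide_less_eq less_imp_le)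
qed

lemma sublinear_filterlim_minus:
  assumes "sublinear h" "0 < c"
  shows "filterlim (\<lambda>y. y - c * h y) at_top at_top"
proof (rule filterlim_at_top_mono)
  show "filterlim (\<lambda>y::real. (1 / 2) * y) at_top at_top"
    by (rule filterlim_tendsto_pos_mult_at_top[OF tendsto_const _ filterlim_ident]) simp
  have "eventually (\<lambda>y. h y \<le> 1 / (2 * c) * y) at_top"
    using assms unfolding sublinear_def by (metis divide_pos_pos mult_pos_pos zero_less_numeral zero_less_one)
  then show "eventually (\<lambda>y. (1 / 2) * y \<le> y - c * h y) at_top"
  proof eventually_elim
    case (elim y)
    have "c * h y \<le> c * (1 / (2 * c) * y)" using elim assms(2) by (intro mult_left_mono) auto
    then show ?case using assms(2) by simp
  qed
qed

lemma eventually_le_mult_of_Limsup_ratio: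
  fixes f g :: "real \<Rightarrow> real"
  assumes "Limsup at_top (\<lambda>x. ereal (f x / g x)) < \<infinity>" "eventually (\<lambda>x. 0 < g x) at_top"
  obtains K where "0 < K" "eventually (\<lambda>x. f x \<le> K * g x) at_top"
proof -
  obtain B where "Limsup at_top (\<lambda>x. ereal (f x / g x)) < ereal B"
    using ereal_dense2[OF assms(1)] by blast
  then have "eventually (\<lambda>x. ereal (f x / g x) < ereal B) at_top" by (rule Limsup_lessD)
  then have "eventually (\<lambda>x. f x \<le> max B 1 * g x) at_top" using assms(2)
  proof eventually_elim
    case (elim x)
    then have "f x < B * g x" by (simp add: pos_divide_less_eq)
    also have "\<dots> \<le> max B 1 * g x" using elim by (intro mult_right_mono) auto
    finally show ?case by simp
  qed
  then show thesis by (intro that[of "max B 1"]) auto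
qed

lemma abs_divide_minus_one_less:
  fixes P F \<delta> \<epsilon> :: real
  assumes "0 < F" "(1 - \<delta>) * F \<le> P" "P \<le> (1 + \<delta>) * F" "\<delta> < \<epsilon>"
  shows "\<bar>P / F - 1\<bar> < \<epsilon>"
proof -
  have "P / F \<le> 1 + \<delta>" "1 - \<delta> \<le> P / F"
    using assms by (simp_all add: divide_le_eq le_divide_eq)
  then show ?thesis using assms(4) by (simp add: abs_less_iff)
qed

lemma abs_divide_minus_one_less':
  fixes F T \<delta> \<epsilon> :: real
  assumes "0 < F" "F \<le> T" "T \<le> (1 + \<delta>) * F" "0 \<le> \<delta>" "\<delta> < \<epsilon>"
  shows "\<bar>F / T - 1\<bar> < \<epsilon>"
proof -
  have T: "0 < T" using assms(1,2) by simp
  have "1 / (1 + \<delta>) \<le> F / T" "F / T \<le> 1"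
    using assms T by (simp_all add: field_simps)
  moreover have "1 - \<delta> \<le> 1 / (1 + \<delta>)"
    using assms(4) by (simp add: field_simps)
  ultimately show ?thesis using assms(5) by (simp add: abs_less_iff)
qed

lemma eventually_mult_le_of_tendsto_ratio:
  fixes f g :: "real \<Rightarrow> real"
  assumes "eventually (\<lambda>x. 0 < g x) at_top" "((\<lambda>x. f x / g x) \<longlongrightarrow> l) at_top" "c < l"
  shows "eventually (\<lambda>x. c * g x \<le> f x) at_top"
  using order_tendstoD(1)[OF assms(2,3)] assms(1)
  by eventually_elim (simp add: pos_less_divide_eq less_imp_le)

lemma eventually_le_mult_of_tendsto_ratio:
  fixes f g :: "real \<Rightarrow> real"
  assumes "eventually (\<lambda>x. 0 < g x) at_top" "((\<lambda>x. f x / g x) \<longlongrightarrow> l) at_top" "l < c"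
  shows "eventually (\<lambda>x. f x \<le> c * g x) at_top"
  using order_tendstoD(2)[OF assms(2,3)] assms(1)
  by eventually_elim (simp add: pos_divide_less_eq less_imp_le)

locale nonneg_order_statistics = prob_space M for M :: "'a measure" +
  fixes X :: "nat \<Rightarrow> 'a \<Rightarrow> real" and n :: nat
  assumes two_le_n: "2 \<le> n"
    and X_measurable: "i \<in> {1..n} \<Longrightarrow> X i \<in> borel_measurable M"
    and X_nonneg: "i \<in> {1..n} \<Longrightarrow> \<omega> \<in> space M \<Longrightarrow> 0 \<le> X i \<omega>"
begin

abbreviation Xmax :: "'a \<Rightarrow> real" where "Xmax \<equiv> ordstat n X n"
abbreviation Xsec :: "'a \<Rightarrow> real" where "Xsec \<equiv> ordstat n X (n - 1)"
abbreviation tail :: "real \<Rightarrow> real" where "tail y \<equiv> \<P>(\<omega> in M. y < Xmax \<omega>)"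
abbreviation offdiag :: "(nat \<times> nat) set" where "offdiag \<equiv> SIGMA i:{1..n}. {1..n} - {i}"

lemma measurable_ordstat: "1 \<le> k \<Longrightarrow> k \<le> n \<Longrightarrow> ordstat n X k \<in> borel_measurable M"
  using X_measurable by (rule borel_measurable_ordstat)

lemma measurable_Xmax [measurable]: "Xmax \<in> borel_measurable M"
  using two_le_n by (intro measurable_ordstat) auto

lemma measurable_Xsec [measurable]: "Xsec \<in> borel_measurable M"
  using two_le_n by (intro measurable_ordstat) auto

lemma Xsec_nonneg: "\<omega> \<in> space M \<Longrightarrow> 0 \<le> Xsec \<omega>"
  using ordstat_nonneg[of n X \<omega> "n - 1"] X_nonneg two_le_n by simp

lemma Xsec_le_Xmax: "Xsec \<omega> \<le> Xmax \<omega>"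
  using ordstat_mono[of "n - 1" n n X \<omega>] two_le_n by simp

lemma Xmax_gt_iff: "y < Xmax \<omega> \<longleftrightarrow> (\<exists>i\<in>{1..n}. y < X i \<omega>)"
  using ordstat_max_gt_iff[of n y X \<omega>] two_le_n by simp

lemma tail_antimono: "s \<le> t \<Longrightarrow> tail t \<le> tail s"
  by (rule finite_measure_mono) auto

lemma one_minus_distF_Xmax: "1 - distF M Xmax x = tail x"
proof -
  have "{\<omega>\<in>space M. x < Xmax \<omega>} = space M - {\<omega>\<in>space M. Xmax \<omega> \<le> x}" by auto
  then show ?thesis unfolding distF_def by (simp add: prob_compl)
qed

lemma tail_tendsto_0: "(tail \<longlongrightarrow> 0) at_top"
proof -
  have "distF M Xmax = cdf (distr M borel Xmax)"
    by (auto simp: distF_def cdf_def measure_distr vimage_def Int_def conj_commute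
        intro!: ext arg_cong2[where f = measure])
  then have "(distF M Xmax \<longlongrightarrow> 1) at_top"
    using real_distribution.cdf_lim_at_top_prob[OF real_distribution_distr] by simp
  then have "((\<lambda>x. 1 - distF M Xmax x) \<longlongrightarrow> 1 - 1) at_top"
    by (intro tendsto_diff tendsto_const)
  then show ?thesis by (simp add: one_minus_distF_Xmax)
qed

lemma sets_exceedance: "i \<in> {1..n} \<Longrightarrow> {\<omega>\<in>space M. y < X i \<omega>} \<in> sets M"
  using X_measurable by (simp add: borel_measurable_iff_greater)

lemma sets_pair_exceedance:
  assumes "i \<in> {1..n}" "j \<in> {1..n}"
  shows "{\<omega>\<in>space M. s < \<bar>X i \<omega>\<bar> \<and> y < X j \<omega>} \<in> sets M"
    and "{\<omega>\<in>space M. y < X i \<omega> \<and> y < X j \<omega>} \<in> sets M"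
proof -
  have [measurable]: "X i \<in> borel_measurable M" "X j \<in> borel_measurable M"
    using assms by (simp_all add: X_measurable)
  show "{\<omega>\<in>space M. s < \<bar>X i \<omega>\<bar> \<and> y < X j \<omega>} \<in> sets M" by measurable
  show "{\<omega>\<in>space M. y < X i \<omega> \<and> y < X j \<omega>} \<in> sets M" by measurable
qed

lemma prob_Xsec_Xmax_le_offdiag:
  "\<P>(\<omega> in M. s < Xsec \<omega> \<and> y < Xmax \<omega>)
     \<le> (\<Sum>p\<in>offdiag. \<P>(\<omega> in M. s < \<bar>X (fst p) \<omega>\<bar> \<and> y < X (snd p) \<omega>))"
proof (rule measure_le_sum_cover)
  show "{\<omega>\<in>space M. s < Xsec \<omega> \<and> y < Xmax \<omega>}
      \<subseteq> (\<Union>p\<in>offdiag. {\<omega>\<in>space M. s < \<bar>X (fst p) \<omega>\<bar> \<and> y < X (snd p) \<omega>})"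
  proof
    fix \<omega> assume \<omega>: "\<omega> \<in> {\<omega>\<in>space M. s < Xsec \<omega> \<and> y < Xmax \<omega>}"
    then obtain k where k: "k \<in> {1..n}" "y < X k \<omega>"
      using Xmax_gt_iff by blast
    obtain i j where ij: "i \<in> {1..n}" "j \<in> {1..n}" "i < j" "s < X i \<omega>" "s < X j \<omega>"
      using ordstat_second_gt_imp[OF two_le_n, where X = X] \<omega> by blast
    obtain l where l: "l \<in> {1..n}" "l \<noteq> k" "s < X l \<omega>"
    proof (cases "i = k")
      case True
      then show thesis using ij by (intro that[of j]) auto
    next
      case False
      then show thesis using ij by (intro that[of i]) auto
    qed
    then show "\<omega> \<in> (\<Union>p\<in>offdiag. {\<omega>\<in>space M. s < \<bar>X (fst p) \<omega>\<bar> \<and> y < X (snd p) \<omega>})"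
      using \<omega> k by (intro UN_I[of "(l, k)"]) auto
  qed
next
  fix p assume "p \<in> offdiag"
  then have "fst p \<in> {1..n}" "snd p \<in> {1..n}" by auto
  then show "{\<omega>\<in>space M. s < \<bar>X (fst p) \<omega>\<bar> \<and> y < X (snd p) \<omega>} \<in> sets M"
    by (rule sets_pair_exceedance(1))
qed simp

lemma prob_Xsec_le_pairs:
  "\<P>(\<omega> in M. s < Xsec \<omega>)
     \<le> (\<Sum>p\<in>{p\<in>{1..n} \<times> {1..n}. fst p < snd p}. \<P>(\<omega> in M. s < X (fst p) \<omega> \<and> s < X (snd p) \<omega>))"
proof (rule measure_le_sum_cover)
  show "finite {p\<in>{1..n} \<times> {1..n}. fst p < snd p}"
    by (rule finite_subset[of _ "{1..n} \<times> {1..n}"]) auto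
  show "{\<omega>\<in>space M. s < Xsec \<omega>}
      \<subseteq> (\<Union>p\<in>{p\<in>{1..n} \<times> {1..n}. fst p < snd p}. {\<omega>\<in>space M. s < X (fst p) \<omega> \<and> s < X (snd p) \<omega>})"
  proof
    fix \<omega> assume \<omega>: "\<omega> \<in> {\<omega>\<in>space M. s < Xsec \<omega>}"
    then obtain i j where "i \<in> {1..n}" "j \<in> {1..n}" "i < j" "s < X i \<omega>" "s < X j \<omega>"
      using ordstat_second_gt_imp[OF two_le_n, where X = X] by blast
    then show "\<omega> \<in> (\<Union>p\<in>{p\<in>{1..n} \<times> {1..n}. fst p < snd p}. {\<omega>\<in>space M. s < X (fst p) \<omega> \<and> s < X (snd p) \<omega>})"
      using \<omega> by (intro UN_I[of "(i, j)"]) simp_all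
  qed
next
  fix p assume "p \<in> {p\<in>{1..n} \<times> {1..n}. fst p < snd p}"
  then have "fst p \<in> {1..n}" "snd p \<in> {1..n}" by auto
  then show "{\<omega>\<in>space M. s < X (fst p) \<omega> \<and> s < X (snd p) \<omega>} \<in> sets M"
    by (rule sets_pair_exceedance(2))
qed

lemma tail_le_sum: "tail y \<le> (\<Sum>i=1..n. \<P>(\<omega> in M. y < X i \<omega>))"
  by (rule measure_le_sum_cover) (auto simp: Xmax_gt_iff intro: sets_exceedance)

lemma sum_le_tail_plus_offdiag:
  "(\<Sum>i=1..n. \<P>(\<omega> in M. y < X i \<omega>))
     \<le> tail y + (\<Sum>p\<in>offdiag. \<P>(\<omega> in M. y < X (fst p) \<omega> \<and> y < X (snd p) \<omega>))"
proof -
  \<comment> \<open>B i: X i is the only coordinate above y; these events are disjoint\<close>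
  define B where "B i = {\<omega>\<in>space M. y < X i \<omega>} - (\<Union>j\<in>{1..n} - {i}. {\<omega>\<in>space M. y < X j \<omega>})" for i
  have B_sets: "B i \<in> sets M" if "i \<in> {1..n}" for i
    unfolding B_def using that by (intro sets.Diff sets.finite_UN sets_exceedance) auto
  have "\<P>(\<omega> in M. y < X i \<omega>)
      \<le> measure M (B i) + (\<Sum>j\<in>{1..n} - {i}. \<P>(\<omega> in M. y < X i \<omega> \<and> y < X j \<omega>))"
    if i: "i \<in> {1..n}" for i
  proof -
    have "\<P>(\<omega> in M. y < X i \<omega>) \<le> (\<Sum>k\<in>insert i ({1..n} - {i}).
        measure M (if k = i then B i else {\<omega>\<in>space M. y < X i \<omega> \<and> y < X k \<omega>}))"
      by (rule measure_le_sum_cover) (use B_sets i in \<open>auto simp: B_def intro: sets_pair_exceedance(2)\<close>)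
    also have "\<dots> = measure M (B i) + (\<Sum>j\<in>{1..n} - {i}. \<P>(\<omega> in M. y < X i \<omega> \<and> y < X j \<omega>))"
      by (subst sum.insert) (auto intro!: sum.cong)
    finally show ?thesis .
  qed
  then have "(\<Sum>i=1..n. \<P>(\<omega> in M. y < X i \<omega>))
      \<le> (\<Sum>i=1..n. measure M (B i)) + (\<Sum>i=1..n. \<Sum>j\<in>{1..n} - {i}. \<P>(\<omega> in M. y < X i \<omega> \<and> y < X j \<omega>))"
    by (subst sum.distrib[symmetric]) (rule sum_mono)
  also have "(\<Sum>i=1..n. measure M (B i)) = measure M (\<Union>i\<in>{1..n}. B i)"
    using B_sets by (intro finite_measure_finite_Union[symmetric]) (auto simp: disjoint_family_on_def B_def)
  also have "\<dots> \<le> tail y"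
  proof (rule finite_measure_mono)
    show "(\<Union>i\<in>{1..n}. B i) \<subseteq> {\<omega>\<in>space M. y < Xmax \<omega>}"
      by (auto simp: B_def Xmax_gt_iff)
  qed measurable
  also have "(\<Sum>i=1..n. \<Sum>j\<in>{1..n} - {i}. \<P>(\<omega> in M. y < X i \<omega> \<and> y < X j \<omega>))
      = (\<Sum>p\<in>offdiag. \<P>(\<omega> in M. y < X (fst p) \<omega> \<and> y < X (snd p) \<omega>))"
    by (subst sum.Sigma) (auto simp: split_def)
  finally show ?thesis by simp
qed

definition negligible :: "(real \<Rightarrow> real) \<Rightarrow> bool" where
  "negligible f \<longleftrightarrow> (\<forall>\<epsilon>>0. eventually (\<lambda>y. f y \<le> \<epsilon> * tail y) at_top)"

lemma negligibleD: "negligible f \<Longrightarrow> 0 < \<epsilon> \<Longrightarrow> eventually (\<lambda>y. f y \<le> \<epsilon> * tail y) at_top"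
  unfolding negligible_def by blast

lemma negligibleI_tendsto:
  assumes "eventually (\<lambda>y. 0 < tail y) at_top" "((\<lambda>y. f y / tail y) \<longlongrightarrow> 0) at_top"
  shows "negligible f"
  unfolding negligible_def
proof (intro allI impI)
  fix \<epsilon> :: real assume "0 < \<epsilon>"
  with assms(2) have "eventually (\<lambda>y. f y / tail y < \<epsilon>) at_top" by (rule order_tendstoD(2))
  with assms(1) show "eventually (\<lambda>y. f y \<le> \<epsilon> * tail y) at_top"
    by eventually_elim (simp add: pos_divide_less_eq less_imp_le)
qed

lemma negligible_mono:
  assumes "eventually (\<lambda>y. f y \<le> g y) at_top" "negligible g"
  shows "negligible f"
  unfolding negligible_def
proof (intro allI impI)
  fix \<epsilon> :: real assume "0 < \<epsilon>"
  with assms(2) have "eventually (\<lambda>y. g y \<le> \<epsilon> * tail y) at_top" by (rule negligibleD)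
  with assms(1) show "eventually (\<lambda>y. f y \<le> \<epsilon> * tail y) at_top"
    by eventually_elim simp
qed

lemma negligible_add:
  assumes "negligible f" "negligible g"
  shows "negligible (\<lambda>y. f y + g y)"
  unfolding negligible_def
proof (intro allI impI)
  fix \<epsilon> :: real assume "0 < \<epsilon>"
  then have "0 < \<epsilon> / 2" by simp
  then have "eventually (\<lambda>y. f y \<le> \<epsilon> / 2 * tail y) at_top" "eventually (\<lambda>y. g y \<le> \<epsilon> / 2 * tail y) at_top"
    using negligibleD[OF assms(1)] negligibleD[OF assms(2)] by blast+
  then show "eventually (\<lambda>y. f y + g y \<le> \<epsilon> * tail y) at_top"
    by eventually_elim simp
qed

lemma negligible_sum:
  assumes "finite I" "\<And>i. i \<in> I \<Longrightarrow> negligible (f i)"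
  shows "negligible (\<lambda>y. \<Sum>i\<in>I. f i y)"
  using assms
proof (induction I rule: finite_induct)
  case empty
  show ?case unfolding negligible_def by simp
next
  case (insert i I)
  then show ?case by (simp add: negligible_add)
qed

lemma negligible_compose:
  assumes "negligible f" "filterlim z at_top at_top"
    and "eventually (\<lambda>y. tail (z y) \<le> C * tail y) at_top"
  shows "negligible (\<lambda>y. f (z y))"
  unfolding negligible_def
proof (intro allI impI)
  fix \<epsilon> :: real assume \<epsilon>: "0 < \<epsilon>"
  define \<delta> where "\<delta> = \<epsilon> / (\<bar>C\<bar> + 1)"
  have "\<delta> * C \<le> \<delta> * (\<bar>C\<bar> + 1)"
    using \<epsilon> by (intro mult_left_mono) (auto simp: \<delta>_def)
  then have \<delta>: "0 < \<delta>" "\<delta> * C \<le> \<epsilon>"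
    using \<epsilon> by (simp_all add: \<delta>_def)
  have "eventually (\<lambda>y. f (z y) \<le> \<delta> * tail (z y)) at_top"
    using negligibleD[OF assms(1) \<delta>(1)] assms(2) by (rule eventually_compose_filterlim)
  with assms(3) show "eventually (\<lambda>y. f (z y) \<le> \<epsilon> * tail y) at_top"
  proof eventually_elim
    case (elim y)
    have "f (z y) \<le> \<delta> * (C * tail y)"
      using elim \<delta>(1) by (meson mult_left_mono less_imp_le order_trans)
    also have "\<dots> \<le> \<epsilon> * tail y"
      using \<delta>(2) by (simp add: mult.assoc[symmetric] mult_right_mono)
    finally show ?case .
  qed
qed

lemma cond_starD:
  assumes "cond_star M n X h" "i \<in> {1..n}" "j \<in> {1..n}" "i \<noteq> j" "0 < t"
  shows "((\<lambda>x. \<P>(\<omega> in M. t * h x < \<bar>X i \<omega>\<bar> \<and> x < X j \<omega>) / tail x) \<longlongrightarrow> 0) at_top"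
  using assms unfolding cond_star_def by blast

lemma negligible_Xsec_Xmax:
  assumes star: "cond_star M n X h" and pos: "eventually (\<lambda>y. 0 < tail y) at_top" and "0 < t"
  shows "negligible (\<lambda>y. \<P>(\<omega> in M. t * h y < Xsec \<omega> \<and> y < Xmax \<omega>))"
proof (rule negligible_mono)
  show "eventually (\<lambda>y. \<P>(\<omega> in M. t * h y < Xsec \<omega> \<and> y < Xmax \<omega>)
      \<le> (\<Sum>p\<in>offdiag. \<P>(\<omega> in M. t * h y < \<bar>X (fst p) \<omega>\<bar> \<and> y < X (snd p) \<omega>))) at_top"
    by (intro always_eventually allI prob_Xsec_Xmax_le_offdiag)
  show "negligible (\<lambda>y. \<Sum>p\<in>offdiag. \<P>(\<omega> in M. t * h y < \<bar>X (fst p) \<omega>\<bar> \<and> y < X (snd p) \<omega>))"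
  proof (intro negligible_sum negligibleI_tendsto[OF pos])
    fix p assume "p \<in> offdiag"
    then show "((\<lambda>y. \<P>(\<omega> in M. t * h y < \<bar>X (fst p) \<omega>\<bar> \<and> y < X (snd p) \<omega>) / tail y) \<longlongrightarrow> 0) at_top"
      by (intro cond_starD[OF star _ _ _ \<open>0 < t\<close>]) auto
  qed simp
qed

lemma negligible_Xsec_Xmax_shifted:
  assumes star: "cond_star M n X h" and pos: "eventually (\<lambda>y. 0 < tail y) at_top"
    and z: "filterlim z at_top at_top"
    and "0 < K" and hK: "eventually (\<lambda>y. h (z y) \<le> K * h y) at_top"
    and tailC: "eventually (\<lambda>y. tail (z y) \<le> C * tail y) at_top" and "0 < t"
  shows "negligible (\<lambda>y. \<P>(\<omega> in M. t * h y < Xsec \<omega> \<and> z y < Xmax \<omega>))"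
proof (rule negligible_mono)
  have "0 < t / K" using \<open>0 < t\<close> \<open>0 < K\<close> by simp
  from negligible_Xsec_Xmax[OF star pos this]
  show "negligible (\<lambda>y. \<P>(\<omega> in M. t / K * h (z y) < Xsec \<omega> \<and> z y < Xmax \<omega>))"
    using z tailC by (rule negligible_compose)
  show "eventually (\<lambda>y. \<P>(\<omega> in M. t * h y < Xsec \<omega> \<and> z y < Xmax \<omega>)
      \<le> \<P>(\<omega> in M. t / K * h (z y) < Xsec \<omega> \<and> z y < Xmax \<omega>)) at_top"
    using hK
  proof eventually_elim
    case (elim y)
    have "t / K * h (z y) \<le> t / K * (K * h y)"
      using elim \<open>0 < t\<close> \<open>0 < K\<close> by (intro mult_left_mono) auto
    then have "t / K * h (z y) \<le> t * h y" using \<open>0 < K\<close> by simp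
    then have "{\<omega>\<in>space M. t * h y < Xsec \<omega> \<and> z y < Xmax \<omega>}
        \<subseteq> {\<omega>\<in>space M. t / K * h (z y) < Xsec \<omega> \<and> z y < Xmax \<omega>}" by auto
    then show ?case by (rule finite_measure_mono) measurable
  qed
qed

lemma negligible_Xsec:
  assumes "cond_starstar M n X h" and pos: "eventually (\<lambda>y. 0 < tail y) at_top"
  obtains L where "0 < L" "negligible (\<lambda>y. \<P>(\<omega> in M. L * h y < Xsec \<omega>))"
proof -
  let ?P = "{p\<in>{1..n} \<times> {1..n}. fst p < snd p}"
  obtain L where "0 < L" and L: "\<forall>i\<in>{1..n}. \<forall>j\<in>{1..n}. i < j \<longrightarrow>
      ((\<lambda>y. \<P>(\<omega> in M. L * h y < X i \<omega> \<and> L * h y < X j \<omega>) / tail y) \<longlongrightarrow> 0) at_top"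
    using assms(1) unfolding cond_starstar_def by blast
  have "negligible (\<lambda>y. \<Sum>p\<in>?P. \<P>(\<omega> in M. L * h y < X (fst p) \<omega> \<and> L * h y < X (snd p) \<omega>))"
  proof (intro negligible_sum negligibleI_tendsto[OF pos])
    show "finite ?P" by (rule finite_subset[of _ "{1..n} \<times> {1..n}"]) auto
  qed (use L in auto)
  then have "negligible (\<lambda>y. \<P>(\<omega> in M. L * h y < Xsec \<omega>))"
    by (rule negligible_mono[rotated]) (intro always_eventually allI prob_Xsec_le_pairs)
  with \<open>0 < L\<close> show thesis by (rule that)
qed

lemma sum_tails_le_tail:
  assumes star: "cond_star M n X h" and pos: "eventually (\<lambda>y. 0 < tail y) at_top"
    and h_le: "eventually (\<lambda>y. h y \<le> y) at_top" and "0 < \<epsilon>"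
  shows "eventually (\<lambda>y. (\<Sum>i=1..n. \<P>(\<omega> in M. y < X i \<omega>)) \<le> (1 + \<epsilon>) * tail y) at_top"
proof -
  \<comment> \<open>two coordinates above y force the first one above h(y), so cond_star applies with t = 1\<close>
  have "negligible (\<lambda>y. \<Sum>p\<in>offdiag. \<P>(\<omega> in M. y < X (fst p) \<omega> \<and> y < X (snd p) \<omega>))"
  proof (rule negligible_mono)
    show "negligible (\<lambda>y. \<Sum>p\<in>offdiag. \<P>(\<omega> in M. 1 * h y < \<bar>X (fst p) \<omega>\<bar> \<and> y < X (snd p) \<omega>))"
    proof (intro negligible_sum negligibleI_tendsto[OF pos])
      fix p assume "p \<in> offdiag"
      then show "((\<lambda>y. \<P>(\<omega> in M. 1 * h y < \<bar>X (fst p) \<omega>\<bar> \<and> y < X (snd p) \<omega>) / tail y) \<longlongrightarrow> 0) at_top"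
        by (intro cond_starD[OF star]) auto
    qed simp
    show "eventually (\<lambda>y. (\<Sum>p\<in>offdiag. \<P>(\<omega> in M. y < X (fst p) \<omega> \<and> y < X (snd p) \<omega>))
        \<le> (\<Sum>p\<in>offdiag. \<P>(\<omega> in M. 1 * h y < \<bar>X (fst p) \<omega>\<bar> \<and> y < X (snd p) \<omega>))) at_top"
      using h_le
    proof eventually_elim
      case (elim y)
      show ?case
      proof (intro sum_mono finite_measure_mono)
        fix p assume "p \<in> offdiag"
        then show "{\<omega>\<in>space M. 1 * h y < \<bar>X (fst p) \<omega>\<bar> \<and> y < X (snd p) \<omega>} \<in> sets M"
          by (intro sets_pair_exceedance) auto
      qed (use elim in auto)
    qed
  qed
  then have "eventually (\<lambda>y. (\<Sum>p\<in>offdiag. \<P>(\<omega> in M. y < X (fst p) \<omega> \<and> y < X (snd p) \<omega>)) \<le> \<epsilon> * tail y) at_top"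
    using \<open>0 < \<epsilon>\<close> by (rule negligibleD)
  then show ?thesis
  proof eventually_elim
    case (elim y)
    then show ?case using sum_le_tail_plus_offdiag[of y] by (simp add: algebra_simps)
  qed
qed

definition admissible_scale :: "(real \<Rightarrow> real) \<Rightarrow> bool" where
  "admissible_scale h \<longleftrightarrow>
     eventually (\<lambda>y. 0 < tail y) at_top \<and> eventually (\<lambda>y. 0 \<le> h y \<and> h y \<le> y) at_top \<and>
     (\<forall>\<epsilon>>0. \<exists>t>0. eventually (\<lambda>y. (1 - \<epsilon>) * tail y \<le> tail (y + t * h y)) at_top) \<and>
     (\<forall>\<epsilon>>0. \<exists>t>0. eventually (\<lambda>y. tail (y - t * h y) \<le> (1 + \<epsilon>) * tail y) at_top)"

definition remainder_negligible :: "(real \<Rightarrow> real) \<Rightarrow> bool" where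
  "remainder_negligible h \<longleftrightarrow> (\<forall>E>0. \<forall>t>0.
     negligible (\<lambda>y. \<P>(\<omega> in M. y < Xmax \<omega> + E * Xsec \<omega> \<and> t * h y < Xsec \<omega>)))"

lemma prob_Xmax_minus_Xsec_ge:
  assumes scale: "admissible_scale h" and star: "cond_star M n X h" and "0 \<le> E" "0 < \<epsilon>"
  shows "eventually (\<lambda>y. (1 - \<epsilon>) * tail y \<le> \<P>(\<omega> in M. y < Xmax \<omega> - E * Xsec \<omega>)) at_top"
proof -
  have pos: "eventually (\<lambda>y. 0 < tail y) at_top" and h: "eventually (\<lambda>y. 0 \<le> h y) at_top"
    using scale unfolding admissible_scale_def by (auto elim: eventually_mono)
  obtain t where "0 < t" and shift: "eventually (\<lambda>y. (1 - \<epsilon> / 2) * tail y \<le> tail (y + t * h y)) at_top"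
    using scale \<open>0 < \<epsilon>\<close> unfolding admissible_scale_def by (meson half_gt_zero)
  define s where "s = t / (E + 1)"
  have "0 < s" using \<open>0 < t\<close> \<open>0 \<le> E\<close> by (simp add: s_def)
  have small: "eventually (\<lambda>y. \<P>(\<omega> in M. s * h y < Xsec \<omega> \<and> y < Xmax \<omega>) \<le> \<epsilon> / 2 * tail y) at_top"
    by (rule negligibleD[OF negligible_Xsec_Xmax[OF star pos \<open>0 < s\<close>]]) (use \<open>0 < \<epsilon>\<close> in simp)
  show ?thesis using shift small h
  proof eventually_elim
    case (elim y)
    \<comment> \<open>if Xsec is at most s h(y), subtracting E Xsec costs less than the shift t h(y)\<close>
    have "{\<omega>\<in>space M. y + t * h y < Xmax \<omega>}
        \<subseteq> {\<omega>\<in>space M. y < Xmax \<omega> - E * Xsec \<omega>} \<union> {\<omega>\<in>space M. s * h y < Xsec \<omega> \<and> y < Xmax \<omega>}"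
    proof
      fix \<omega> assume \<omega>: "\<omega> \<in> {\<omega>\<in>space M. y + t * h y < Xmax \<omega>}"
      have "0 \<le> t * h y" using \<open>0 < t\<close> elim(3) by simp
      then have "y < Xmax \<omega>" using \<omega> by simp
      have "E * Xsec \<omega> \<le> t * h y" if "Xsec \<omega> \<le> s * h y"
      proof -
        have "E * Xsec \<omega> \<le> (E + 1) * Xsec \<omega>" using Xsec_nonneg[of \<omega>] \<omega> by (simp add: algebra_simps)
        also have "\<dots> \<le> (E + 1) * (s * h y)" using that \<open>0 \<le> E\<close> by (intro mult_left_mono) auto
        also have "\<dots> = t * h y" using \<open>0 \<le> E\<close> by (simp add: s_def)
        finally show ?thesis .
      qed
      then show "\<omega> \<in> {\<omega>\<in>space M. y < Xmax \<omega> - E * Xsec \<omega>} \<union> {\<omega>\<in>space M. s * h y < Xsec \<omega> \<and> y < Xmax \<omega>}"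
        using \<omega> \<open>y < Xmax \<omega>\<close> by (cases "s * h y < Xsec \<omega>") auto
    qed
    then have "tail (y + t * h y)
        \<le> \<P>(\<omega> in M. y < Xmax \<omega> - E * Xsec \<omega>) + \<P>(\<omega> in M. s * h y < Xsec \<omega> \<and> y < Xmax \<omega>)"
      by (rule measure_le_cover2) measurable
    then show ?case using elim(1,2) by (simp add: algebra_simps)
  qed
qed

lemma prob_Xmax_plus_Xsec_le:
  assumes scale: "admissible_scale h" and rem: "remainder_negligible h" and "0 \<le> E" "0 < \<epsilon>"
  shows "eventually (\<lambda>y. \<P>(\<omega> in M. y < Xmax \<omega> + E * Xsec \<omega>) \<le> (1 + \<epsilon>) * tail y) at_top"
proof -
  obtain t where "0 < t" and shift: "eventually (\<lambda>y. tail (y - t * h y) \<le> (1 + \<epsilon> / 2) * tail y) at_top"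
    using scale \<open>0 < \<epsilon>\<close> unfolding admissible_scale_def by (meson half_gt_zero)
  define E' where "E' = E + 1"
  have "0 < E'" "0 < t / E'" using \<open>0 \<le> E\<close> \<open>0 < t\<close> by (simp_all add: E'_def)
  then have "negligible (\<lambda>y. \<P>(\<omega> in M. y < Xmax \<omega> + E' * Xsec \<omega> \<and> t / E' * h y < Xsec \<omega>))"
    using rem unfolding remainder_negligible_def by blast
  then have small: "eventually (\<lambda>y. \<P>(\<omega> in M. y < Xmax \<omega> + E' * Xsec \<omega> \<and> t / E' * h y < Xsec \<omega>)
      \<le> \<epsilon> / 2 * tail y) at_top"
    by (rule negligibleD) (use \<open>0 < \<epsilon>\<close> in simp)
  show ?thesis using shift small
  proof eventually_elim
    case (elim y)
    \<comment> \<open>E may be 0, but remainder_negligible only speaks about positive weights\<close>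
    have "{\<omega>\<in>space M. y < Xmax \<omega> + E * Xsec \<omega>}
        \<subseteq> {\<omega>\<in>space M. y - t * h y < Xmax \<omega>}
          \<union> {\<omega>\<in>space M. y < Xmax \<omega> + E' * Xsec \<omega> \<and> t / E' * h y < Xsec \<omega>}"
    proof
      fix \<omega> assume \<omega>: "\<omega> \<in> {\<omega>\<in>space M. y < Xmax \<omega> + E * Xsec \<omega>}"
      have "E * Xsec \<omega> \<le> E' * Xsec \<omega>" using Xsec_nonneg[of \<omega>] \<omega> by (simp add: E'_def algebra_simps)
      moreover have "E' * Xsec \<omega> \<le> t * h y" if "Xsec \<omega> \<le> t / E' * h y"
        using mult_left_mono[OF that, of E'] \<open>0 < E'\<close> by simp
      ultimately show "\<omega> \<in> {\<omega>\<in>space M. y - t * h y < Xmax \<omega>}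
          \<union> {\<omega>\<in>space M. y < Xmax \<omega> + E' * Xsec \<omega> \<and> t / E' * h y < Xsec \<omega>}"
        using \<omega> by (cases "t / E' * h y < Xsec \<omega>") auto
    qed
    then have "\<P>(\<omega> in M. y < Xmax \<omega> + E * Xsec \<omega>)
        \<le> tail (y - t * h y) + \<P>(\<omega> in M. y < Xmax \<omega> + E' * Xsec \<omega> \<and> t / E' * h y < Xsec \<omega>)"
      by (rule measure_le_cover2) measurable
    then show ?case using elim by (simp add: algebra_simps)
  qed
qed

lemma lincomb_ordstat_close_to_Xmax:
  assumes "\<omega> \<in> space M" "0 < a" "a \<le> c 0" "0 \<le> d" "\<forall>i\<in>{1..n-1}. c i \<in> {-d..d}"
  shows "\<bar>(\<Sum>i=0..n-1. c i * ordstat n X (n - i) \<omega>) - c 0 * Xmax \<omega>\<bar> \<le> c 0 * (d * real (n - 1) / a) * Xsec \<omega>"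
proof -
  have "\<bar>c i * ordstat n X (n - i) \<omega>\<bar> \<le> d * Xsec \<omega>" if i: "i \<in> {1..n-1}" for i
  proof -
    have "0 \<le> ordstat n X (n - i) \<omega>"
      using X_nonneg assms(1) i by (intro ordstat_nonneg) auto
    moreover have "ordstat n X (n - i) \<omega> \<le> Xsec \<omega>"
      using i by (intro ordstat_mono) auto
    moreover have "\<bar>c i\<bar> \<le> d" using bspec[OF assms(5) i] by (simp add: abs_le_iff)
    ultimately show ?thesis by (simp add: abs_mult mult_mono)
  qed
  then have "\<bar>\<Sum>i=1..n-1. c i * ordstat n X (n - i) \<omega>\<bar> \<le> (\<Sum>i=1..n-1. d * Xsec \<omega>)"
    by (intro order_trans[OF sum_abs sum_mono])
  also have "\<dots> = real (n - 1) * d * Xsec \<omega>" by simp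
  also have "\<dots> \<le> c 0 / a * (real (n - 1) * d * Xsec \<omega>)"
  proof -
    have "1 \<le> c 0 / a" using assms(2,3) by simp
    moreover have "0 \<le> real (n - 1) * d * Xsec \<omega>" using assms(1,4) Xsec_nonneg[of \<omega>] by simp
    ultimately show ?thesis using mult_right_mono by fastforce
  qed
  also have "\<dots> = c 0 * (d * real (n - 1) / a) * Xsec \<omega>" by simp
  finally show ?thesis
    by (subst sum.atLeast_Suc_atMost) simp_all
qed

lemma uniform_tail_equivalence:
  assumes scale: "admissible_scale h" and star: "cond_star M n X h"
    and rem: "remainder_negligible h" and "0 < a" "a \<le> b" "0 \<le> d"
  shows "\<forall>\<epsilon>>0. eventually (\<lambda>x. \<forall>c. c 0 \<in> {a..b} \<and> (\<forall>i\<in>{1..n-1}. c i \<in> {-d..d}) \<longrightarrow>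
            \<bar>measure M {\<omega> \<in> space M. (\<Sum>i=0..n-1. c i * ordstat n X (n - i) \<omega>) > x}
               / measure M {\<omega> \<in> space M. c 0 * ordstat n X n \<omega> > x} - 1\<bar> < \<epsilon> \<and>
            \<bar>measure M {\<omega> \<in> space M. c 0 * ordstat n X n \<omega> > x}
               / (\<Sum>i=1..n. measure M {\<omega> \<in> space M. c 0 * X i \<omega> > x}) - 1\<bar> < \<epsilon>) at_top"
proof (intro allI impI)
  fix \<epsilon> :: real assume "0 < \<epsilon>"
  then have "0 < \<epsilon> / 2" by simp
  define E where "E = d * real (n - 1) / a"
  have "0 \<le> E" using \<open>0 < a\<close> \<open>0 \<le> d\<close> by (simp add: E_def)
  have pos: "eventually (\<lambda>y. 0 < tail y) at_top" and "eventually (\<lambda>y. h y \<le> y) at_top"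
    using scale unfolding admissible_scale_def by (auto elim: eventually_mono)
  \<comment> \<open>uniformity in c: all estimates are used at y = x / c 0 only, and x / c 0 \<ge> x / b\<close>
  have "eventually (\<lambda>y. 0 < tail y \<and>
      (1 - \<epsilon> / 2) * tail y \<le> \<P>(\<omega> in M. y < Xmax \<omega> - E * Xsec \<omega>) \<and>
      \<P>(\<omega> in M. y < Xmax \<omega> + E * Xsec \<omega>) \<le> (1 + \<epsilon> / 2) * tail y \<and>
      (\<Sum>i=1..n. \<P>(\<omega> in M. y < X i \<omega>)) \<le> (1 + \<epsilon> / 2) * tail y) at_top"
    using pos prob_Xmax_minus_Xsec_ge[OF scale star \<open>0 \<le> E\<close> \<open>0 < \<epsilon> / 2\<close>]
      prob_Xmax_plus_Xsec_le[OF scale rem \<open>0 \<le> E\<close> \<open>0 < \<epsilon> / 2\<close>]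
      sum_tails_le_tail[OF star pos \<open>eventually (\<lambda>y. h y \<le> y) at_top\<close> \<open>0 < \<epsilon> / 2\<close>]
    by eventually_elim blast
  then obtain Y0 where Y0: "\<And>y. Y0 \<le> y \<Longrightarrow> 0 < tail y \<and>
      (1 - \<epsilon> / 2) * tail y \<le> \<P>(\<omega> in M. y < Xmax \<omega> - E * Xsec \<omega>) \<and>
      \<P>(\<omega> in M. y < Xmax \<omega> + E * Xsec \<omega>) \<le> (1 + \<epsilon> / 2) * tail y \<and>
      (\<Sum>i=1..n. \<P>(\<omega> in M. y < X i \<omega>)) \<le> (1 + \<epsilon> / 2) * tail y"
    unfolding eventually_at_top_linorder by blast
  define Y where "Y = max Y0 1"
  have "0 < Y" "Y0 \<le> Y" by (simp_all add: Y_def)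
  show "eventually (\<lambda>x. \<forall>c. c 0 \<in> {a..b} \<and> (\<forall>i\<in>{1..n-1}. c i \<in> {-d..d}) \<longrightarrow>
            \<bar>measure M {\<omega> \<in> space M. (\<Sum>i=0..n-1. c i * ordstat n X (n - i) \<omega>) > x}
               / measure M {\<omega> \<in> space M. c 0 * ordstat n X n \<omega> > x} - 1\<bar> < \<epsilon> \<and>
            \<bar>measure M {\<omega> \<in> space M. c 0 * ordstat n X n \<omega> > x}
               / (\<Sum>i=1..n. measure M {\<omega> \<in> space M. c 0 * X i \<omega> > x}) - 1\<bar> < \<epsilon>) at_top"
    unfolding eventually_at_top_linorder
  proof (intro exI[of _ "b * Y"] allI impI)
    fix x and c :: "nat \<Rightarrow> real"
    assume x: "b * Y \<le> x" and c: "c 0 \<in> {a..b} \<and> (\<forall>i\<in>{1..n-1}. c i \<in> {-d..d})"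
    then have c0: "0 < c 0" "a \<le> c 0" "c 0 \<le> b" using \<open>0 < a\<close> by auto
    define y where "y = x / c 0"
    have "c 0 * Y \<le> b * Y" using c0 \<open>0 < Y\<close> by (intro mult_right_mono) auto
    with x have "Y \<le> y" using c0 by (simp add: y_def pos_le_divide_eq mult.commute)
    with \<open>Y0 \<le> Y\<close> have y_bounds: "0 < tail y \<and>
      (1 - \<epsilon> / 2) * tail y \<le> \<P>(\<omega> in M. y < Xmax \<omega> - E * Xsec \<omega>) \<and>
      \<P>(\<omega> in M. y < Xmax \<omega> + E * Xsec \<omega>) \<le> (1 + \<epsilon> / 2) * tail y \<and>
      (\<Sum>i=1..n. \<P>(\<omega> in M. y < X i \<omega>)) \<le> (1 + \<epsilon> / 2) * tail y"
      by (intro Y0) simp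
    have scale_x: "x < c 0 * v \<longleftrightarrow> y < v" for v
      using c0 by (simp add: y_def pos_divide_less_eq mult.commute)
    define S where "S \<omega> = (\<Sum>i=0..n-1. c i * ordstat n X (n - i) \<omega>)" for \<omega>
    have S_close: "\<bar>S \<omega> - c 0 * Xmax \<omega>\<bar> \<le> c 0 * E * Xsec \<omega>" if "\<omega> \<in> space M" for \<omega>
      using lincomb_ordstat_close_to_Xmax[where c = c, OF that \<open>0 < a\<close> c0(2) \<open>0 \<le> d\<close>] c
      unfolding S_def E_def by blast
    have [measurable]: "S \<in> borel_measurable M"
      unfolding S_def
    proof (rule borel_measurable_sum)
      fix i assume "i \<in> {0..n-1}"
      then have [measurable]: "ordstat n X (n - i) \<in> borel_measurable M"
        using two_le_n by (intro measurable_ordstat) auto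
      show "(\<lambda>\<omega>. c i * ordstat n X (n - i) \<omega>) \<in> borel_measurable M" by measurable
    qed
    have "{\<omega>\<in>space M. y < Xmax \<omega> - E * Xsec \<omega>} \<subseteq> {\<omega>\<in>space M. x < S \<omega>}"
    proof safe
      fix \<omega> assume "\<omega> \<in> space M" "y < Xmax \<omega> - E * Xsec \<omega>"
      then have "x < c 0 * (Xmax \<omega> - E * Xsec \<omega>)" "c 0 * Xmax \<omega> - c 0 * E * Xsec \<omega> \<le> S \<omega>"
        using scale_x S_close[of \<omega>] by (auto simp: abs_le_iff)
      then show "x < S \<omega>" by (simp add: algebra_simps)
    qed
    then have S_lower: "\<P>(\<omega> in M. y < Xmax \<omega> - E * Xsec \<omega>) \<le> \<P>(\<omega> in M. x < S \<omega>)"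
      by (rule finite_measure_mono) measurable
    have "{\<omega>\<in>space M. x < S \<omega>} \<subseteq> {\<omega>\<in>space M. y < Xmax \<omega> + E * Xsec \<omega>}"
    proof safe
      fix \<omega> assume "\<omega> \<in> space M" "x < S \<omega>"
      then have "x < c 0 * (Xmax \<omega> + E * Xsec \<omega>)"
        using S_close[of \<omega>] by (auto simp: abs_le_iff algebra_simps)
      then show "y < Xmax \<omega> + E * Xsec \<omega>" using scale_x by simp
    qed
    then have S_upper: "\<P>(\<omega> in M. x < S \<omega>) \<le> \<P>(\<omega> in M. y < Xmax \<omega> + E * Xsec \<omega>)"
      by (rule finite_measure_mono) measurable
    have "\<bar>\<P>(\<omega> in M. x < S \<omega>) / tail y - 1\<bar> < \<epsilon>"
      using y_bounds S_lower S_upper \<open>0 < \<epsilon>\<close>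
      by (intro abs_divide_minus_one_less[where \<delta> = "\<epsilon> / 2"]) auto
    moreover have "\<bar>tail y / (\<Sum>i=1..n. \<P>(\<omega> in M. y < X i \<omega>)) - 1\<bar> < \<epsilon>"
      using y_bounds tail_le_sum \<open>0 < \<epsilon>\<close>
      by (intro abs_divide_minus_one_less'[where \<delta> = "\<epsilon> / 2"]) auto
    ultimately show "\<bar>measure M {\<omega> \<in> space M. (\<Sum>i=0..n-1. c i * ordstat n X (n - i) \<omega>) > x}
               / measure M {\<omega> \<in> space M. c 0 * ordstat n X n \<omega> > x} - 1\<bar> < \<epsilon> \<and>
            \<bar>measure M {\<omega> \<in> space M. c 0 * ordstat n X n \<omega> > x}
               / (\<Sum>i=1..n. measure M {\<omega> \<in> space M. c 0 * X i \<omega> > x}) - 1\<bar> < \<epsilon>"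
      by (simp add: S_def scale_x)
  qed
qed

lemma remainder_negligible_starstar:
  assumes star: "cond_star M n X h" and ss: "cond_starstar M n X h"
    and pos: "eventually (\<lambda>y. 0 < tail y) at_top" and "sublinear h"
    and h_shift: "\<And>c. 0 < c \<Longrightarrow> \<exists>K>0. eventually (\<lambda>y. h (y - c * h y) \<le> K * h y) at_top"
    and tail_shift: "\<And>c. 0 < c \<Longrightarrow> \<exists>C. eventually (\<lambda>y. tail (y - c * h y) \<le> C * tail y) at_top"
  shows "remainder_negligible h"
  unfolding remainder_negligible_def
proof (intro allI impI)
  fix E t :: real assume "0 < E" "0 < t"
  obtain L where "0 < L" and L: "negligible (\<lambda>y. \<P>(\<omega> in M. L * h y < Xsec \<omega>))"
    using negligible_Xsec[OF ss pos] by blast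
  define c where "c = E * L"
  have "0 < c" using \<open>0 < E\<close> \<open>0 < L\<close> by (simp add: c_def)
  obtain K where "0 < K" "eventually (\<lambda>y. h (y - c * h y) \<le> K * h y) at_top"
    using h_shift[OF \<open>0 < c\<close>] by blast
  moreover obtain C where "eventually (\<lambda>y. tail (y - c * h y) \<le> C * tail y) at_top"
    using tail_shift[OF \<open>0 < c\<close>] by blast
  ultimately have "negligible (\<lambda>y. \<P>(\<omega> in M. t * h y < Xsec \<omega> \<and> y - c * h y < Xmax \<omega>))"
    using sublinear_filterlim_minus[OF \<open>sublinear h\<close> \<open>0 < c\<close>]
    by (intro negligible_Xsec_Xmax_shifted[OF star pos _ _ _ _ \<open>0 < t\<close>])
  then have sum: "negligible (\<lambda>y. \<P>(\<omega> in M. L * h y < Xsec \<omega>)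
      + \<P>(\<omega> in M. t * h y < Xsec \<omega> \<and> y - c * h y < Xmax \<omega>))"
    using L by (intro negligible_add)
  show "negligible (\<lambda>y. \<P>(\<omega> in M. y < Xmax \<omega> + E * Xsec \<omega> \<and> t * h y < Xsec \<omega>))"
  proof (rule negligible_mono[OF always_eventually sum], intro allI)
    fix y
    \<comment> \<open>below L h(y), the term E Xsec is at most c h(y)\<close>
    have "{\<omega>\<in>space M. y < Xmax \<omega> + E * Xsec \<omega> \<and> t * h y < Xsec \<omega>}
        \<subseteq> {\<omega>\<in>space M. L * h y < Xsec \<omega>} \<union> {\<omega>\<in>space M. t * h y < Xsec \<omega> \<and> y - c * h y < Xmax \<omega>}"
    proof safe
      fix \<omega> assume "\<omega> \<in> space M" "y < Xmax \<omega> + E * Xsec \<omega>" "t * h y < Xsec \<omega>"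
        and "\<not> L * h y < Xsec \<omega>"
      moreover from \<open>\<not> L * h y < Xsec \<omega>\<close> have "E * Xsec \<omega> \<le> c * h y"
        using mult_left_mono[of "Xsec \<omega>" "L * h y" E] \<open>0 < E\<close> by (simp add: c_def)
      ultimately show "y - c * h y < Xmax \<omega>" by simp
    qed
    then show "\<P>(\<omega> in M. y < Xmax \<omega> + E * Xsec \<omega> \<and> t * h y < Xsec \<omega>)
        \<le> \<P>(\<omega> in M. L * h y < Xsec \<omega>) + \<P>(\<omega> in M. t * h y < Xsec \<omega> \<and> y - c * h y < Xmax \<omega>)"
      by (rule measure_le_cover2) measurable
  qed
qed

lemma remainder_negligible_scaling:
  assumes star: "cond_star M n X h" and pos: "eventually (\<lambda>y. 0 < tail y) at_top"
    and h_scale: "\<And>E. 0 < E \<Longrightarrow> \<exists>K>0. eventually (\<lambda>y. h (y * (1 / (1 + E))) \<le> K * h y) at_top"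
    and tail_scale: "\<And>E. 0 < E \<Longrightarrow> \<exists>C. eventually (\<lambda>y. tail (y * (1 / (1 + E))) \<le> C * tail y) at_top"
  shows "remainder_negligible h"
  unfolding remainder_negligible_def
proof (intro allI impI)
  fix E t :: real assume "0 < E" "0 < t"
  have "filterlim (\<lambda>y. y * (1 / (1 + E))) at_top at_top"
    using \<open>0 < E\<close> by (intro filterlim_at_top_mult_tendsto_pos[OF tendsto_const]) (auto intro: filterlim_ident)
  moreover obtain K where "0 < K" "eventually (\<lambda>y. h (y * (1 / (1 + E))) \<le> K * h y) at_top"
    using h_scale[OF \<open>0 < E\<close>] by blast
  moreover obtain C where "eventually (\<lambda>y. tail (y * (1 / (1 + E))) \<le> C * tail y) at_top"
    using tail_scale[OF \<open>0 < E\<close>] by blast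
  ultimately have "negligible (\<lambda>y. \<P>(\<omega> in M. t * h y < Xsec \<omega> \<and> y * (1 / (1 + E)) < Xmax \<omega>))"
    by (intro negligible_Xsec_Xmax_shifted[OF star pos _ _ _ _ \<open>0 < t\<close>])
  then show "negligible (\<lambda>y. \<P>(\<omega> in M. y < Xmax \<omega> + E * Xsec \<omega> \<and> t * h y < Xsec \<omega>))"
  proof (rule negligible_mono[OF always_eventually, rotated], intro allI)
    fix y
    \<comment> \<open>Xsec \<le> Xmax, so Xmax + E Xsec > y forces Xmax > y / (1 + E)\<close>
    have "{\<omega>\<in>space M. y < Xmax \<omega> + E * Xsec \<omega> \<and> t * h y < Xsec \<omega>}
        \<subseteq> {\<omega>\<in>space M. t * h y < Xsec \<omega> \<and> y * (1 / (1 + E)) < Xmax \<omega>}"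
    proof safe
      fix \<omega> assume "y < Xmax \<omega> + E * Xsec \<omega>"
      moreover have "E * Xsec \<omega> \<le> E * Xmax \<omega>"
        using Xsec_le_Xmax \<open>0 < E\<close> by (intro mult_left_mono) auto
      ultimately have "y < (1 + E) * Xmax \<omega>" by (simp add: algebra_simps)
      then show "y * (1 / (1 + E)) < Xmax \<omega>" using \<open>0 < E\<close> by (simp add: field_simps)
    qed
    then show "\<P>(\<omega> in M. y < Xmax \<omega> + E * Xsec \<omega> \<and> t * h y < Xsec \<omega>)
        \<le> \<P>(\<omega> in M. t * h y < Xsec \<omega> \<and> y * (1 / (1 + E)) < Xmax \<omega>)"
      by (rule finite_measure_mono) measurable
  qed
qed

lemma tail_pos_of_upper_endpoint:
  assumes "upper_endpoint (distF M Xmax) = \<infinity>"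
  shows "0 < tail y"
proof -
  have "ereal y < Sup (ereal ` {x. distF M Xmax x < 1})"
    using assms unfolding upper_endpoint_def by simp
  then obtain x where "distF M Xmax x < 1" "y < x"
    by (auto simp: less_Sup_iff)
  then have "0 < tail x" using one_minus_distF_Xmax[of x] by simp
  also have "tail x \<le> tail y" using \<open>y < x\<close> by (intro tail_antimono) simp
  finally show ?thesis .
qed

lemma gmda_tail_ratio_tendsto:
  assumes "upper_endpoint (distF M Xmax) = \<infinity>" "gmda (distF M Xmax) h"
  shows "((\<lambda>x. tail (x + s * h x) / tail x) \<longlongrightarrow> exp (- s)) at_top"
  using assms unfolding gmda_def by (simp add: one_minus_distF_Xmax)

lemma eventually_tail_pos_of_upper_endpoint:
  "upper_endpoint (distF M Xmax) = \<infinity> \<Longrightarrow> eventually (\<lambda>y. 0 < tail y) at_top"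
  by (intro always_eventually allI tail_pos_of_upper_endpoint)

lemma sublinear_of_gmda:
  assumes ep: "upper_endpoint (distF M Xmax) = \<infinity>" and gm: "gmda (distF M Xmax) h"
  shows "sublinear h"
  unfolding sublinear_def
proof (intro allI impI)
  fix \<delta> :: real assume "0 < \<delta>"
  define q where "q = 1 / \<delta>"
  have "0 < q" using \<open>0 < \<delta>\<close> by (simp add: q_def)
  \<comment> \<open>h x > \<delta> x would give tail 0 \<le> tail (x - q h x) \<le> (exp q + 1) tail x, but tail x \<rightarrow> 0\<close>
  have "((\<lambda>x. tail (x - q * h x) / tail x) \<longlongrightarrow> exp q) at_top"
    using gmda_tail_ratio_tendsto[OF ep gm, of "-q"] by simp
  then have ev1: "eventually (\<lambda>x. tail (x - q * h x) \<le> (exp q + 1) * tail x) at_top"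
    by (rule eventually_le_mult_of_tendsto_ratio[OF eventually_tail_pos_of_upper_endpoint[OF ep]]) simp
  have "0 < tail 0 / (exp q + 1)"
    using tail_pos_of_upper_endpoint[OF ep] by (simp add: add_pos_pos)
  then have ev2: "eventually (\<lambda>x. tail x < tail 0 / (exp q + 1)) at_top"
    by (rule order_tendstoD(2)[OF tail_tendsto_0])
  show "eventually (\<lambda>y. h y \<le> \<delta> * y) at_top" using ev1 ev2
  proof eventually_elim
    case (elim x)
    show ?case
    proof (rule ccontr)
      assume "\<not> h x \<le> \<delta> * x"
      then have "x \<le> q * h x" using \<open>0 < \<delta>\<close> by (simp add: q_def field_simps)
      then have "tail 0 \<le> tail (x - q * h x)" by (intro tail_antimono) simp
      also have "\<dots> < tail 0" using elim by (simp add: pos_less_divide_eq add_pos_pos mult.commute)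
      finally show False by simp
    qed
  qed
qed

lemma gmda_scale_shift_le:
  assumes ep: "upper_endpoint (distF M Xmax) = \<infinity>" and gm: "gmda (distF M Xmax) h" and "0 < c"
  shows "eventually (\<lambda>y. h (y - c * h y) \<le> 2 * h y) at_top"
proof -
  define z where "z y = y - c * h y" for y
  have z: "filterlim z at_top at_top"
    unfolding z_def by (rule sublinear_filterlim_minus[OF sublinear_of_gmda[OF ep gm] \<open>0 < c\<close>])
  have lim: "((\<lambda>y. tail (z y + h (z y)) / tail (z y) * (tail (z y) / tail y)) \<longlongrightarrow> exp (- 1) * exp c) at_top"
    using filterlim_compose[OF gmda_tail_ratio_tendsto[OF ep gm, of 1] z]
      gmda_tail_ratio_tendsto[OF ep gm, of "-c"]
    by (intro tendsto_mult) (simp_all add: z_def)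
  have cancel: "tail (z y + h (z y)) / tail (z y) * (tail (z y) / tail y) = tail (z y + h (z y)) / tail y" for y
    using tail_pos_of_upper_endpoint[OF ep, of "z y"] by simp
  have "exp (- 1) * exp c = exp (c - 1)" by (simp add: mult_exp_exp)
  with lim have lim_z: "((\<lambda>y. tail (z y + h (z y)) / tail y) \<longlongrightarrow> exp (c - 1)) at_top"
    unfolding cancel by simp
  have lim_2: "((\<lambda>y. tail (y + (2 - c) * h y) / tail y) \<longlongrightarrow> exp (c - 2)) at_top"
    using gmda_tail_ratio_tendsto[OF ep gm, of "2 - c"] by simp
  \<comment> \<open>the two limits differ, so eventually z y + h(z y) < y + (2 - c) h(y)\<close>
  define m where "m = (exp (c - 2) + exp (c - 1)) / 2"
  have "exp (c - 2) < m" "m < exp (c - 1)" by (simp_all add: m_def)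
  with lim_z lim_2 have "eventually (\<lambda>y. m < tail (z y + h (z y)) / tail y) at_top"
      "eventually (\<lambda>y. tail (y + (2 - c) * h y) / tail y < m) at_top"
    by (simp_all add: order_tendstoD)
  then show ?thesis
  proof eventually_elim
    case (elim y)
    show ?case
    proof (rule ccontr)
      assume "\<not> h (y - c * h y) \<le> 2 * h y"
      then have "y + (2 - c) * h y \<le> z y + h (z y)" by (simp add: z_def algebra_simps)
      then have "tail (z y + h (z y)) / tail y \<le> tail (y + (2 - c) * h y) / tail y"
        using tail_pos_of_upper_endpoint[OF ep] by (intro divide_right_mono tail_antimono) auto
      with elim show False by simp
    qed
  qed
qed

lemma admissible_scale_of_gmda:
  assumes ep: "upper_endpoint (distF M Xmax) = \<infinity>" and "\<forall>x. 0 < h x"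
    and gm: "gmda (distF M Xmax) h"
  shows "admissible_scale h"
  unfolding admissible_scale_def
proof (intro conjI allI impI)
  show pos: "eventually (\<lambda>y. 0 < tail y) at_top"
    using ep by (rule eventually_tail_pos_of_upper_endpoint)
  have "eventually (\<lambda>y. h y \<le> 1 * y) at_top"
    by (rule sublinear_of_gmda[OF ep gm, unfolded sublinear_def, rule_format]) simp
  then show "eventually (\<lambda>y. 0 \<le> h y \<and> h y \<le> y) at_top"
    by (rule eventually_mono) (use \<open>\<forall>x. 0 < h x\<close> in \<open>auto intro: less_imp_le\<close>)
  fix \<epsilon> :: real assume "0 < \<epsilon>"
  have "1 - \<epsilon> < exp (- (\<epsilon> / 2))"
    using exp_ge_add_one_self[of "- (\<epsilon> / 2)"] \<open>0 < \<epsilon>\<close> by simp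
  then have "eventually (\<lambda>y. (1 - \<epsilon>) * tail y \<le> tail (y + \<epsilon> / 2 * h y)) at_top"
    by (rule eventually_mult_le_of_tendsto_ratio[OF pos gmda_tail_ratio_tendsto[OF ep gm]])
  then show "\<exists>t>0. eventually (\<lambda>y. (1 - \<epsilon>) * tail y \<le> tail (y + t * h y)) at_top"
    using \<open>0 < \<epsilon>\<close> by (intro exI[of _ "\<epsilon> / 2"]) simp
  define t where "t = ln (1 + \<epsilon> / 2)"
  have "0 < t" "exp t = 1 + \<epsilon> / 2" using \<open>0 < \<epsilon>\<close> by (simp_all add: t_def)
  then have "((\<lambda>y. tail (y - t * h y) / tail y) \<longlongrightarrow> 1 + \<epsilon> / 2) at_top"
    using gmda_tail_ratio_tendsto[OF ep gm, of "-t"] by simp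
  then have "eventually (\<lambda>y. tail (y - t * h y) \<le> (1 + \<epsilon>) * tail y) at_top"
    by (rule eventually_le_mult_of_tendsto_ratio[OF pos]) (use \<open>0 < \<epsilon>\<close> in linarith)
  with \<open>0 < t\<close> show "\<exists>t>0. eventually (\<lambda>y. tail (y - t * h y) \<le> (1 + \<epsilon>) * tail y) at_top"
    by blast
qed

lemma remainder_negligible_of_gmda:
  assumes ep: "upper_endpoint (distF M Xmax) = \<infinity>" and gm: "gmda (distF M Xmax) h"
    and "cond_star M n X h" "cond_starstar M n X h"
  shows "remainder_negligible h"
proof (rule remainder_negligible_starstar[OF assms(3,4) _ sublinear_of_gmda[OF ep gm]])
  show pos: "eventually (\<lambda>y. 0 < tail y) at_top"
    using ep by (rule eventually_tail_pos_of_upper_endpoint)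
  fix c :: real assume "0 < c"
  show "\<exists>K>0. eventually (\<lambda>y. h (y - c * h y) \<le> K * h y) at_top"
    using gmda_scale_shift_le[OF ep gm \<open>0 < c\<close>] by (intro exI[of _ 2]) simp
  have "((\<lambda>y. tail (y - c * h y) / tail y) \<longlongrightarrow> exp c) at_top"
    using gmda_tail_ratio_tendsto[OF ep gm, of "-c"] by simp
  then have "eventually (\<lambda>y. tail (y - c * h y) \<le> (exp c + 1) * tail y) at_top"
    by (rule eventually_le_mult_of_tendsto_ratio[OF pos]) simp
  then show "\<exists>C. eventually (\<lambda>y. tail (y - c * h y) \<le> C * tail y) at_top" by blast
qed

lemma eventually_tail_pos_of_longtailed:
  assumes "longtailed (distF M Xmax)"
  shows "eventually (\<lambda>y. 0 < tail y) at_top"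
  using assms unfolding longtailed_def eventually_at_top_linorder
  by (auto simp: one_minus_distF_Xmax)

lemma HclassD:
  assumes "h \<in> Hclass (distF M Xmax)"
  shows "eventually (\<lambda>y. 0 < h y) at_top" "sublinear h"
    and "((\<lambda>x. tail (x + s * h x) / tail x) \<longlongrightarrow> 1) at_top"
    and "Limsup at_top (\<lambda>x. ereal (h (x + s * h x) / h x)) < \<infinity>"
  using assms sublinearI_tendsto unfolding Hclass_def by (auto simp: one_minus_distF_Xmax)

lemma admissible_scale_of_Hclass:
  assumes lt: "longtailed (distF M Xmax)" and hH: "h \<in> Hclass (distF M Xmax)"
  shows "admissible_scale h"
  unfolding admissible_scale_def
proof (intro conjI allI impI)
  show pos: "eventually (\<lambda>y. 0 < tail y) at_top"
    using lt by (rule eventually_tail_pos_of_longtailed)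
  have "eventually (\<lambda>y. h y \<le> 1 * y) at_top"
    by (rule HclassD(2)[OF hH, unfolded sublinear_def, rule_format]) simp
  with HclassD(1)[OF hH] show "eventually (\<lambda>y. 0 \<le> h y \<and> h y \<le> y) at_top"
    by eventually_elim simp
  fix \<epsilon> :: real assume "0 < \<epsilon>"
  have "eventually (\<lambda>y. (1 - \<epsilon>) * tail y \<le> tail (y + 1 * h y)) at_top"
    by (rule eventually_mult_le_of_tendsto_ratio[OF pos HclassD(3)[OF hH]]) (use \<open>0 < \<epsilon>\<close> in simp)
  then show "\<exists>t>0. eventually (\<lambda>y. (1 - \<epsilon>) * tail y \<le> tail (y + t * h y)) at_top"
    using zero_less_one by blast
  have "((\<lambda>y. tail (y - 1 * h y) / tail y) \<longlongrightarrow> 1) at_top"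
    using HclassD(3)[OF hH, of "-1"] by simp
  then have "eventually (\<lambda>y. tail (y - 1 * h y) \<le> (1 + \<epsilon>) * tail y) at_top"
    by (rule eventually_le_mult_of_tendsto_ratio[OF pos]) (use \<open>0 < \<epsilon>\<close> in simp)
  then show "\<exists>t>0. eventually (\<lambda>y. tail (y - t * h y) \<le> (1 + \<epsilon>) * tail y) at_top"
    using zero_less_one by blast
qed

lemma remainder_negligible_of_Hclass:
  assumes lt: "longtailed (distF M Xmax)" and hH: "h \<in> Hclass (distF M Xmax)"
    and "cond_star M n X h" "cond_starstar M n X h"
  shows "remainder_negligible h"
proof (rule remainder_negligible_starstar[OF assms(3,4) _ HclassD(2)[OF hH]])
  show pos: "eventually (\<lambda>y. 0 < tail y) at_top"
    using lt by (rule eventually_tail_pos_of_longtailed)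
  fix c :: real assume "0 < c"
  have "Limsup at_top (\<lambda>x. ereal (h (x - c * h x) / h x)) < \<infinity>"
    using HclassD(4)[OF hH, of "-c"] by simp
  then show "\<exists>K>0. eventually (\<lambda>y. h (y - c * h y) \<le> K * h y) at_top"
    by (rule eventually_le_mult_of_Limsup_ratio[OF _ HclassD(1)[OF hH]]) blast
  have "((\<lambda>y. tail (y - c * h y) / tail y) \<longlongrightarrow> 1) at_top"
    using HclassD(3)[OF hH, of "-c"] by simp
  then have "eventually (\<lambda>y. tail (y - c * h y) \<le> 2 * tail y) at_top"
    by (rule eventually_le_mult_of_tendsto_ratio[OF pos]) simp
  then show "\<exists>C. eventually (\<lambda>y. tail (y - c * h y) \<le> C * tail y) at_top" by blast
qed

lemma remainder_negligible_of_domvar: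
  assumes lt: "longtailed (distF M Xmax)" and "domvar_dist (distF M Xmax)"
    and hH: "h \<in> Hclass (distF M Xmax)" and "domvar h" and star: "cond_star M n X h"
  shows "remainder_negligible h"
proof (rule remainder_negligible_scaling[OF star])
  show pos: "eventually (\<lambda>y. 0 < tail y) at_top"
    using lt by (rule eventually_tail_pos_of_longtailed)
  have domvar_tail: "domvar tail"
    using \<open>domvar_dist (distF M Xmax)\<close> unfolding domvar_dist_def one_minus_distF_Xmax .
  fix E :: real assume "0 < E"
  then have "0 < 1 / (1 + E)" by simp
  then have "Limsup at_top (\<lambda>x. ereal (h (x * (1 / (1 + E))) / h x)) < \<infinity>"
    using \<open>domvar h\<close> unfolding domvar_def by blast
  then show "\<exists>K>0. eventually (\<lambda>y. h (y * (1 / (1 + E))) \<le> K * h y) at_top"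
    by (rule eventually_le_mult_of_Limsup_ratio[OF _ HclassD(1)[OF hH]]) blast
  have "Limsup at_top (\<lambda>x. ereal (tail (x * (1 / (1 + E))) / tail x)) < \<infinity>"
    using domvar_tail \<open>0 < 1 / (1 + E)\<close> unfolding domvar_def by blast
  then show "\<exists>C. eventually (\<lambda>y. tail (y * (1 / (1 + E))) \<le> C * tail y) at_top"
    by (rule eventually_le_mult_of_Limsup_ratio[OF _ pos]) blast
qed

end

theorem corollary3p1:
  fixes M :: "'a measure" and X :: "nat \<Rightarrow> 'a \<Rightarrow> real" and n :: nat
    and a b d :: real
  assumes "prob_space M"
    and "n \<ge> 2"
    and meas: "\<forall>i\<in>{1..n}. X i \<in> borel_measurable M"
    and nonneg: "\<forall>i\<in>{1..n}. \<forall>\<omega>\<in>space M. X i \<omega> \<ge> 0"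
    and nondegen: "\<forall>i\<in>{1..n}. measure M {\<omega> \<in> space M. X i \<omega> > 0} > 0"
    and cases:
      "(upper_endpoint (distF M (ordstat n X n)) = \<infinity> \<and>
         (\<exists>h. (\<forall>x. h x > 0) \<and> gmda (distF M (ordstat n X n)) h \<and>
              cond_star M n X h \<and> cond_starstar M n X h))
     \<or> (longtailed (distF M (ordstat n X n)) \<and>
         (\<exists>h\<in>Hclass (distF M (ordstat n X n)). cond_star M n X h \<and> cond_starstar M n X h))
     \<or> (longtailed (distF M (ordstat n X n)) \<and> domvar_dist (distF M (ordstat n X n)) \<and>
         (\<exists>h\<in>Hclass (distF M (ordstat n X n)). domvar h \<and> cond_star M n X h))"
    and "0 < a" "a \<le> b" "0 \<le> d"
  shows "\<forall>\<epsilon>>0. eventually (\<lambda>x. \<forall>c. c 0 \<in> {a..b} \<and> (\<forall>i\<in>{1..n-1}. c i \<in> {-d..d}) \<longrightarrow>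
            \<bar>measure M {\<omega> \<in> space M. (\<Sum>i=0..n-1. c i * ordstat n X (n - i) \<omega>) > x}
               / measure M {\<omega> \<in> space M. c 0 * ordstat n X n \<omega> > x} - 1\<bar> < \<epsilon> \<and>
            \<bar>measure M {\<omega> \<in> space M. c 0 * ordstat n X n \<omega> > x}
               / (\<Sum>i=1..n. measure M {\<omega> \<in> space M. c 0 * X i \<omega> > x}) - 1\<bar> < \<epsilon>) at_top"
proof -
  have "nonneg_order_statistics M X n"
    unfolding nonneg_order_statistics_def nonneg_order_statistics_axioms_def
    using assms(1-4) by auto
  then interpret nonneg_order_statistics M X n .
  note main = uniform_tail_equivalence[OF _ _ _ \<open>0 < a\<close> \<open>a \<le> b\<close> \<open>0 \<le> d\<close>]
  from cases consider
      (gmda) h where "upper_endpoint (distF M Xmax) = \<infinity>" "\<forall>x. 0 < h x" "gmda (distF M Xmax) h"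
        "cond_star M n X h" "cond_starstar M n X h"
    | (Hclass) h where "longtailed (distF M Xmax)" "h \<in> Hclass (distF M Xmax)"
        "cond_star M n X h" "cond_starstar M n X h"
    | (domvar) h where "longtailed (distF M Xmax)" "domvar_dist (distF M Xmax)"
        "h \<in> Hclass (distF M Xmax)" "domvar h" "cond_star M n X h"
    by blast
  then show ?thesis
  proof cases
    case gmda
    show ?thesis
      by (rule main[OF admissible_scale_of_gmda[OF gmda(1-3)] gmda(4)
            remainder_negligible_of_gmda[OF gmda(1,3-5)]])
  next
    case Hclass
    show ?thesis
      by (rule main[OF admissible_scale_of_Hclass[OF Hclass(1,2)] Hclass(3)
            remainder_negligible_of_Hclass[OF Hclass]])
  next
    case domvar
    show ?thesis
      by (rule main[OF admissible_scale_of_Hclass[OF domvar(1,3)] domvar(5)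
            remainder_negligible_of_domvar[OF domvar]])
  qed
qed

end
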